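(* Let $f$ be a $C^{1}$ diffeomorphism of a compact Riemannian manifold $M$ admitting a partially hyperbolic splitting $TM=E^{s}\oplus_{\prec} E^{1}\oplus_{\prec} \cdots \oplus_{\prec}E^{l}\oplus_{\prec} E^{u}$ with $\dim E^{i}=1$ for $1\leq i\leq l$; write $s=\dim E^s$, $u=\dim E^u$. Then there exists $T_{2}\in\mathbb{N}$ such that for all $1\leq i_{s}\leq s$, $1\leq i_{u}\leq u$, all $x\in M$ and all $n\geq T_{2}$, $$\max_{\substack{V\subset T_{x}M\\\dim V=i_{s}+l+u}}|\det Df_{x}^{n}|_{V}|\leq\max_{\substack{V\subset T_{x}M\\\dim V=l+u}}|\det Df_{x}^{n}|_{V}|\quad\text{and}\quad \max_{\substack{V\subset T_{x}M\\\dim V=i_{u}}}|\det Df_{x}^{n}|_{V}|\leq\max_{\substack{V\subset T_{x}M\\\dim V=u}}|\det Df_{x}^{n}|_{V}|.$$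
   Context: For a linear subspace $V\subset T_xM$, $|\det Df^n_x|_{V}|$ is the absolute determinant of $Df^n_x|_V:V\to Df^n_x(V)$ w.r.t. the Riemannian inner products. Partially hyperbolic splitting: each $(E^s\oplus E^1\oplus\cdots\oplus E^i)\oplus_\prec(E^{i+1}\oplus\cdots\oplus E^l\oplus E^u)$, $0\le i\le l$, is a dominated splitting (continuous $Df$-invariant subbundles $E,F$ with $\frac{\|Df^k_x v_E\|}{\|v_E\|}\le C\lambda^k\frac{\|Df^k_x v_F\|}{\|v_F\|}$ for some $C>0,\lambda\in(0,1)$), and there are $C>0,\lambda\in(0,1)$ with $\|Df^k_x v^s\|\le C\lambda^k\|v^s\|$ for $v^s\in E^s(x)$ and $\|Df^{-k}_x v^u\|\le C\lambda^k\|v^u\|$ for $v^u\in E^u(x)$, all $k\in\mathbb N$. *)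

theory Defs
  imports "HOL-Analysis.Analysis"
begin

text \<open>Compact Riemannian manifolds are modelled as compact C1 submanifolds of a
Euclidean space carrying the induced inner product (every compact Riemannian
manifold admits an isometric embedding, Nash / Nash-Kuiper).\<close>

definition C1_on :: "'a::euclidean_space set \<Rightarrow> ('a \<Rightarrow> 'b::euclidean_space) \<Rightarrow> bool" where
  "C1_on U F \<longleftrightarrow> (\<exists>F'. (\<forall>x\<in>U. (F has_derivative blinfun_apply (F' x)) (at x)) \<and> continuous_on U F')"

definition C1_diffeo_open :: "'a::euclidean_space set \<Rightarrow> 'a set \<Rightarrow> ('a \<Rightarrow> 'a) \<Rightarrow> bool" where
  "C1_diffeo_open U W \<phi> \<longleftrightarrow> open U \<and> open W \<and> bij_betw \<phi> U W \<and> C1_on U \<phi> \<and> C1_on W (inv_into U \<phi>)"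

definition C1_submanifold :: "'a::euclidean_space set \<Rightarrow> bool" where
  "C1_submanifold M \<longleftrightarrow>
     (\<forall>x\<in>M. \<exists>U W \<phi> S. x \<in> U \<and> C1_diffeo_open U W \<phi> \<and> subspace S \<and> \<phi> ` (M \<inter> U) = S \<inter> W)"

definition tangent_space :: "'a::euclidean_space set \<Rightarrow> 'a \<Rightarrow> 'a set" where
  "tangent_space M x = {v. \<exists>\<gamma>::real \<Rightarrow> 'a. (\<forall>t. \<gamma> t \<in> M) \<and> \<gamma> 0 = x \<and> (\<gamma> has_vector_derivative v) (at 0)}"

definition C1_map_on :: "'a::euclidean_space set \<Rightarrow> ('a \<Rightarrow> 'a) \<Rightarrow> bool" where
  "C1_map_on M g \<longleftrightarrow> g ` M \<subseteq> M \<and>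
     (\<forall>x\<in>M. \<exists>U F. open U \<and> x \<in> U \<and> C1_on U F \<and> (\<forall>y\<in>M \<inter> U. F y = g y))"

definition C1_diffeo_of :: "'a::euclidean_space set \<Rightarrow> ('a \<Rightarrow> 'a) \<Rightarrow> bool" where
  "C1_diffeo_of M f \<longleftrightarrow> bij_betw f M M \<and> C1_map_on M f \<and> C1_map_on M (inv_into M f)"

text \<open>Derivative of g at x (along M); its restriction to the tangent space is well defined.\<close>
definition diffM :: "'a::euclidean_space set \<Rightarrow> ('a \<Rightarrow> 'a) \<Rightarrow> 'a \<Rightarrow> ('a \<Rightarrow> 'a)" where
  "diffM M g x = (SOME D. (g has_derivative D) (at x within M))"

definition det_nat :: "nat \<Rightarrow> (nat \<Rightarrow> nat \<Rightarrow> real) \<Rightarrow> real" where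
  "det_nat k A = (\<Sum>p | p permutes {..<k}. of_int (sign p) * (\<Prod>i<k. A i (p i)))"

definition gram_vol :: "nat \<Rightarrow> (nat \<Rightarrow> 'a::euclidean_space) \<Rightarrow> real" where
  "gram_vol k b = sqrt (det_nat k (\<lambda>i j. b i \<bullet> b j))"

definition abs_det_on :: "('a::euclidean_space \<Rightarrow> 'a) \<Rightarrow> 'a set \<Rightarrow> real" where
  "abs_det_on L V =
     (let k = dim V;
          b = (SOME b :: nat \<Rightarrow> 'a. inj_on b {..<k} \<and> independent (b ` {..<k}) \<and> span (b ` {..<k}) = V)
      in gram_vol k (L \<circ> b) / gram_vol k b)"

definition max_det :: "('a::euclidean_space \<Rightarrow> 'a) \<Rightarrow> 'a set \<Rightarrow> nat \<Rightarrow> real" where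
  "max_det L T k = Sup {abs_det_on L V | V. subspace V \<and> V \<subseteq> T \<and> dim V = k}"

text \<open>Continuity of a field of subspaces (lower semicontinuity; together with the
constant dimensions assumed below this is continuity).\<close>
definition cont_subbundle :: "'a::euclidean_space set \<Rightarrow> ('a \<Rightarrow> 'a set) \<Rightarrow> bool" where
  "cont_subbundle M E \<longleftrightarrow>
     (\<forall>x\<in>M. \<forall>v\<in>E x. \<forall>y. (\<forall>n. y n \<in> M) \<and> y \<longlonglongrightarrow> x \<longrightarrow>
        (\<exists>w. (\<forall>n. w n \<in> E (y n)) \<and> w \<longlonglongrightarrow> v))"

definition invariant_subbundle :: "'a::euclidean_space set \<Rightarrow> ('a \<Rightarrow> 'a) \<Rightarrow> ('a \<Rightarrow> 'a set) \<Rightarrow> bool" where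
  "invariant_subbundle M f E \<longleftrightarrow> (\<forall>x\<in>M. diffM M f x ` E x = E (f x))"

definition dominated_splitting ::
  "'a::euclidean_space set \<Rightarrow> ('a \<Rightarrow> 'a) \<Rightarrow> ('a \<Rightarrow> 'a set) \<Rightarrow> ('a \<Rightarrow> 'a set) \<Rightarrow> bool" where
  "dominated_splitting M f E F \<longleftrightarrow>
     cont_subbundle M E \<and> cont_subbundle M F \<and> invariant_subbundle M f E \<and> invariant_subbundle M f F \<and>
     (\<exists>C lam. C > 0 \<and> 0 < lam \<and> lam < 1 \<and>
        (\<forall>x\<in>M. \<forall>k::nat. \<forall>vE\<in>E x. \<forall>vF\<in>F x. vE \<noteq> 0 \<longrightarrow> vF \<noteq> 0 \<longrightarrow>
           norm (diffM M (f ^^ k) x vE) / norm vE \<le> C * lam ^ k * (norm (diffM M (f ^^ k) x vF) / norm vF)))"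

definition partially_hyperbolic_splitting ::
  "'a::euclidean_space set \<Rightarrow> ('a \<Rightarrow> 'a) \<Rightarrow> ('a \<Rightarrow> 'a set) \<Rightarrow> (nat \<Rightarrow> 'a \<Rightarrow> 'a set) \<Rightarrow> nat \<Rightarrow> ('a \<Rightarrow> 'a set) \<Rightarrow> bool" where
  "partially_hyperbolic_splitting M f Es Ec l Eu \<longleftrightarrow>
     (\<forall>x\<in>M. subspace (Es x) \<and> subspace (Eu x) \<and> (\<forall>i\<in>{1..l}. subspace (Ec i x)) \<and>
        span (Es x \<union> (\<Union>i\<in>{1..l}. Ec i x) \<union> Eu x) = tangent_space M x \<and>
        dim (Es x) + (\<Sum>i=1..l. dim (Ec i x)) + dim (Eu x) = dim (tangent_space M x)) \<and>
     (\<forall>i\<in>{0..l}. dominated_splitting M f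
        (\<lambda>x. span (Es x \<union> (\<Union>j\<in>{1..i}. Ec j x)))
        (\<lambda>x. span ((\<Union>j\<in>{i+1..l}. Ec j x) \<union> Eu x))) \<and>
     (\<exists>C lam. C > 0 \<and> 0 < lam \<and> lam < 1 \<and>
        (\<forall>x\<in>M. \<forall>k::nat.
           (\<forall>v\<in>Es x. norm (diffM M (f ^^ k) x v) \<le> C * lam ^ k * norm v) \<and>
           (\<forall>v\<in>Eu x. norm (diffM M (inv_into M f ^^ k) x v) \<le> C * lam ^ k * norm v)))"

end

theory Submission
  imports Defs "Jordan_Normal_Form.Determinant"
begin

text \<open>Choose n so large that C lam^n \<le> 1, where C and lam are the constants of the uniform
contraction of E^s under f and of E^u under f^(-1). Then L = Df^n_x does not expand vectors of E^s(x)
and, because Df^(-n) contracts E^u(f^n x), does not shrink vectors of E^u(x). Both inequalities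
hold for every linear map L with these two properties. If dim V > l + u, then V meets E^s in a
unit vector z, and |det L|_V| \<le> |det L|_(V \<inter> z^\<bottom>)| |L z| \<le> |det L|_(V \<inter> z^\<bottom>)|, so one can
descend to dimension l + u. If dim V < u, some unit vector y of E^u has L y orthogonal to L V,
so |det L|_V| \<le> |det L|_V| |L y| \<le> |det L|_(V + \<real> y)|, so one can ascend to dimension u.
Both estimates are computations with Gram determinants, since |det L|_V| is the ratio of the Gram
determinants of L b and b for any basis b of V.\<close>

no_notation Matrix.scalar_prod (infix "\<bullet>" 70)
hide_const (open) Matrix.orthogonal

section \<open>Gram determinants\<close>

abbreviation mat_of_nat_fun :: "nat \<Rightarrow> (nat \<Rightarrow> nat \<Rightarrow> real) \<Rightarrow> real mat" where
  "mat_of_nat_fun k A \<equiv> mat k k (\<lambda>(i, j). A i j)"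

lemma det_nat_eq_det: "det_nat k A = Determinant.det (mat_of_nat_fun k A)"
  unfolding det_nat_def Determinant.det_def by (simp add: atLeast0LessThan)

lemma det_nat_cong:
  assumes "\<And>i j. i < k \<Longrightarrow> j < k \<Longrightarrow> A i j = B i j"
  shows "det_nat k A = det_nat k B"
proof -
  have "mat_of_nat_fun k A = mat_of_nat_fun k B"
    using assms by (intro eq_matI) auto
  then show ?thesis by (simp add: det_nat_eq_det)
qed

lemma det_nat_0 [simp]: "det_nat 0 A = 1"
  by (simp add: det_nat_eq_det Determinant.det_def)

lemma det_nat_congruent:
  "det_nat k (\<lambda>i j. \<Sum>a<k. \<Sum>c<k. P a i * P c j * G a c) = (det_nat k P)\<^sup>2 * det_nat k G"
proof -
  let ?P = "mat_of_nat_fun k P" and ?G = "mat_of_nat_fun k G"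
  have "mat_of_nat_fun k (\<lambda>i j. \<Sum>a<k. \<Sum>c<k. P a i * P c j * G a c) = transpose_mat ?P * ?G * ?P"
  proof (rule eq_matI)
    fix i j assume "i < dim_row (transpose_mat ?P * ?G * ?P)" "j < dim_col (transpose_mat ?P * ?G * ?P)"
    then have ij: "i < k" "j < k" by auto
    have "(transpose_mat ?P * ?G * ?P) $$ (i, j) = (\<Sum>c<k. (\<Sum>a<k. P a i * G a c) * P c j)"
      using ij by (simp add: scalar_prod_def atLeast0LessThan)
    also have "\<dots> = (\<Sum>a<k. \<Sum>c<k. P a i * P c j * G a c)"
      by (simp add: sum_distrib_right sum_distrib_left mult_ac) (subst sum.swap, simp add: mult_ac)
    finally show "mat_of_nat_fun k (\<lambda>i j. \<Sum>a<k. \<Sum>c<k. P a i * P c j * G a c) $$ (i, j)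
        = (transpose_mat ?P * ?G * ?P) $$ (i, j)"
      using ij by simp
  qed auto
  moreover have P: "?P \<in> carrier_mat k k" and G: "?G \<in> carrier_mat k k"
    and PT: "transpose_mat ?P \<in> carrier_mat k k"
    by auto
  ultimately show ?thesis
    unfolding det_nat_eq_det
    by (simp add: det_mult[OF PT mult_carrier_mat[OF G P]] det_mult[OF G P] det_transpose[OF P]
        power2_eq_square)
qed

lemma det_nat_Suc_last_row_zero:
  assumes "\<And>j. j < k \<Longrightarrow> A k j = 0"
  shows "det_nat (Suc k) A = det_nat k A * A k k"
proof -
  let ?A = "mat_of_nat_fun (Suc k) A"
  have "Determinant.det ?A = (\<Sum>j<Suc k. ?A $$ (k, j) * cofactor ?A k j)"
    by (rule laplace_expansion_row) auto
  also have "\<dots> = ?A $$ (k, k) * cofactor ?A k k"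
    using assms by simp
  also have "mat_delete ?A k k = mat_of_nat_fun k A"
    by (intro eq_matI) (auto simp: mat_delete_def)
  then have "cofactor ?A k k = Determinant.det (mat_of_nat_fun k A)"
    by (simp add: cofactor_def)
  finally show ?thesis by (simp add: det_nat_eq_det mult_ac)
qed

lemma det_nat_unit_upper_triangular:
  assumes "\<And>i j. i < k \<Longrightarrow> j < i \<Longrightarrow> A i j = 0" and "\<And>i. i < k \<Longrightarrow> A i i = 1"
  shows "det_nat k A = 1"
proof -
  have "upper_triangular (mat_of_nat_fun k A)"
    using assms(1) unfolding upper_triangular_def by auto
  then have "Determinant.det (mat_of_nat_fun k A) = prod_list (diag_mat (mat_of_nat_fun k A))"
    by (rule det_upper_triangular[where n = k]) simp
  also have "\<dots> = 1"
    using assms(2) by (simp add: prod_list_diag_prod)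
  finally show ?thesis by (simp add: det_nat_eq_det)
qed

abbreviation gram_det :: "nat \<Rightarrow> (nat \<Rightarrow> 'a::euclidean_space) \<Rightarrow> real" where
  "gram_det k b \<equiv> det_nat k (\<lambda>i j. b i \<bullet> b j)"

lemma gram_det_cong: "(\<And>i. i < k \<Longrightarrow> b i = c i) \<Longrightarrow> gram_det k b = gram_det k c"
  by (rule det_nat_cong) simp

lemma span_image_lessThan_imp_sum:
  fixes b :: "nat \<Rightarrow> 'a::real_vector"
  shows "p \<in> span (b ` {..<k}) \<Longrightarrow> \<exists>a. p = (\<Sum>i<k. a i *\<^sub>R b i)"
proof (induction k arbitrary: p)
  case (Suc k)
  have "b ` {..<Suc k} = insert (b k) (b ` {..<k})"
    by (auto simp: lessThan_Suc)
  with Suc.prems obtain c where "p - c *\<^sub>R b k \<in> span (b ` {..<k})"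
    using span_breakdown_eq by metis
  with Suc.IH obtain a where "p - c *\<^sub>R b k = (\<Sum>i<k. a i *\<^sub>R b i)"
    by blast
  then show ?case
    by (intro exI[of _ "a(k := c)"]) (simp add: lessThan_Suc algebra_simps)
qed simp

lemma gram_det_change_basis:
  fixes b c :: "nat \<Rightarrow> 'a::euclidean_space"
  assumes "\<And>j. j < k \<Longrightarrow> c j = (\<Sum>i<k. P i j *\<^sub>R b i)"
  shows "gram_det k c = (det_nat k P)\<^sup>2 * gram_det k b"
proof -
  have "gram_det k c = det_nat k (\<lambda>i j. \<Sum>a<k. \<Sum>d<k. P a i * P d j * (b a \<bullet> b d))"
    by (rule det_nat_cong)
      (simp add: assms inner_sum_left inner_sum_right sum_distrib_left mult_ac,
       subst sum.swap, simp add: mult_ac)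
  then show ?thesis by (simp add: det_nat_congruent)
qed

text \<open>Subtracting from b k its projection p onto the span of the earlier vectors is a change
of basis of determinant 1 and makes the last row of the Gram matrix vanish off the diagonal.\<close>

lemma gram_det_Suc:
  fixes b :: "nat \<Rightarrow> 'a::euclidean_space"
  assumes p: "p \<in> span (b ` {..<k})" and orth: "\<And>i. i < k \<Longrightarrow> (b k - p) \<bullet> b i = 0"
  shows "gram_det (Suc k) b = gram_det k b * ((b k - p) \<bullet> (b k - p))"
proof -
  obtain a where a: "p = (\<Sum>i<k. a i *\<^sub>R b i)"
    using span_image_lessThan_imp_sum[OF p] by blast
  define c where "c = b(k := b k - p)"
  define E where "E = (\<lambda>i j. if i = j then 1 else if j = k \<and> i < k then - a i else (0::real))"
  have "c j = (\<Sum>i<Suc k. E i j *\<^sub>R b i)" if "j < Suc k" for j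
  proof (cases "j = k")
    case True
    have "(\<Sum>i<k. E i j *\<^sub>R b i) = (\<Sum>i<k. (- a i) *\<^sub>R b i)"
      using True by (intro sum.cong) (auto simp: E_def)
    then show ?thesis
      using True by (simp add: c_def a lessThan_Suc E_def sum_negf)
  next
    case False
    then have "(\<Sum>i<Suc k. E i j *\<^sub>R b i) = (\<Sum>i<Suc k. if i = j then b i else 0)"
      by (intro sum.cong) (auto simp: E_def)
    then show ?thesis
      using False that by (simp add: c_def)
  qed
  moreover have "det_nat (Suc k) E = 1"
    by (rule det_nat_unit_upper_triangular) (auto simp: E_def)
  ultimately have "gram_det (Suc k) b = gram_det (Suc k) c"
    using gram_det_change_basis[of "Suc k" c E b] by simp
  also have "\<dots> = gram_det k c * (c k \<bullet> c k)"
    by (rule det_nat_Suc_last_row_zero) (auto simp: c_def orth)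
  also have "gram_det k c = gram_det k b"
    by (rule gram_det_cong) (simp add: c_def)
  finally show ?thesis by (simp add: c_def)
qed

lemma orthogonal_projection_exists:
  fixes x :: "'a::euclidean_space"
  obtains p where "p \<in> span S" "\<And>w. w \<in> span S \<Longrightarrow> (x - p) \<bullet> w = 0"
proof -
  obtain p q where "p \<in> span S" "\<And>w. w \<in> span S \<Longrightarrow> orthogonal q w" "x = p + q"
    using orthogonal_subspace_decomp_exists[of S x] by blast
  then show thesis
    using that[of p] by (simp add: Linear_Algebra.orthogonal_def)
qed

lemma gram_det_Suc_projection:
  fixes b :: "nat \<Rightarrow> 'a::euclidean_space"
  obtains p where "p \<in> span (b ` {..<k})" "\<And>w. w \<in> span (b ` {..<k}) \<Longrightarrow> (b k - p) \<bullet> w = 0"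
    "gram_det (Suc k) b = gram_det k b * ((b k - p) \<bullet> (b k - p))"
proof -
  obtain p where p: "p \<in> span (b ` {..<k})" "\<And>w. w \<in> span (b ` {..<k}) \<Longrightarrow> (b k - p) \<bullet> w = 0"
    using orthogonal_projection_exists[of "b ` {..<k}" "b k"] by blast
  moreover have "gram_det (Suc k) b = gram_det k b * ((b k - p) \<bullet> (b k - p))"
    using gram_det_Suc[OF p(1)] p(2) by (simp add: span_base)
  ultimately show thesis
    using that by blast
qed

lemma gram_det_nonneg: "gram_det k b \<ge> 0"
proof (induction k)
  case (Suc k)
  obtain p where "gram_det (Suc k) b = gram_det k b * ((b k - p) \<bullet> (b k - p))"
    by (rule gram_det_Suc_projection)
  with Suc.IH show ?case by simp
qed simp

lemma gram_det_Suc_le: "gram_det (Suc k) b \<le> gram_det k b * (b k \<bullet> b k)"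
proof -
  obtain p where p: "p \<in> span (b ` {..<k})" "\<And>w. w \<in> span (b ` {..<k}) \<Longrightarrow> (b k - p) \<bullet> w = 0"
    and G: "gram_det (Suc k) b = gram_det k b * ((b k - p) \<bullet> (b k - p))"
    using gram_det_Suc_projection[of b k] by blast
  have "(b k - p) \<bullet> p = 0"
    using p by blast
  then have "b k \<bullet> b k = p \<bullet> p + (b k - p) \<bullet> (b k - p)"
    by (simp add: inner_diff inner_commute)
  then have "(b k - p) \<bullet> (b k - p) \<le> b k \<bullet> b k"
    by simp
  with G gram_det_nonneg[of k b] show ?thesis
    by (simp add: mult_left_mono)
qed

lemma gram_det_Suc_orthogonal:
  assumes "\<And>i. i < k \<Longrightarrow> b k \<bullet> b i = 0"
  shows "gram_det (Suc k) b = gram_det k b * (b k \<bullet> b k)"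
  using gram_det_Suc[of 0 b k] assms by (simp add: span_zero)

lemma gram_det_pos:
  "inj_on b {..<k} \<Longrightarrow> independent (b ` {..<k}) \<Longrightarrow> gram_det k b > 0"
proof (induction k)
  case (Suc k)
  have image: "b ` {..<Suc k} = insert (b k) (b ` {..<k})"
    by (auto simp: lessThan_Suc)
  have "inj_on b (insert k {..<k})"
    using Suc.prems(1) by (simp add: lessThan_Suc)
  then have "inj_on b {..<k}" "b k \<notin> b ` {..<k}"
    by (auto simp: inj_on_insert)
  moreover from this(2) have "independent (b ` {..<k})" "b k \<notin> span (b ` {..<k})"
    using Suc.prems(2) unfolding image by (simp_all add: independent_insert)
  moreover obtain p where "p \<in> span (b ` {..<k})"
    and "gram_det (Suc k) b = gram_det k b * ((b k - p) \<bullet> (b k - p))"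
    by (rule gram_det_Suc_projection)
  moreover have "b k - p \<noteq> 0" if "p \<in> span (b ` {..<k})" "b k \<notin> span (b ` {..<k})"
    using that by auto
  ultimately show ?case
    using Suc.IH by simp
qed simp

section \<open>Absolute determinants on subspaces\<close>

definition indexed_basis :: "'a::euclidean_space set \<Rightarrow> nat \<Rightarrow> (nat \<Rightarrow> 'a) \<Rightarrow> bool" where
  "indexed_basis V k b \<longleftrightarrow> inj_on b {..<k} \<and> independent (b ` {..<k}) \<and> span (b ` {..<k}) = V"

lemma indexed_basis_dim: "indexed_basis V k b \<Longrightarrow> dim V = k"
  unfolding indexed_basis_def
  by (metis card_image card_lessThan dim_eq_card_independent dim_span)

lemma indexed_basis_in: "indexed_basis V k b \<Longrightarrow> i < k \<Longrightarrow> b i \<in> V"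
  unfolding indexed_basis_def by (auto intro: span_base)

lemma indexed_basis_exists:
  fixes V :: "'a::euclidean_space set"
  assumes "subspace V"
  obtains b where "indexed_basis V (dim V) b"
proof -
  obtain B where B: "B \<subseteq> V" "independent B" "V \<subseteq> span B" "card B = dim V"
    by (rule basis_exists)
  obtain h where "bij_betw h {..<dim V} B"
    using ex_bij_betw_nat_finite[OF finiteI_independent[OF B(2)]] B(4)
    by (auto simp: atLeast0LessThan)
  moreover have "span B = V"
    using B(1,3) assms by (metis span_eq_iff span_mono subset_antisym)
  ultimately have "indexed_basis V (dim V) h"
    using B(2) by (auto simp: indexed_basis_def bij_betw_def)
  then show thesis
    by (rule that)
qed

lemma indexed_basis_extend:
  fixes W :: "'a::euclidean_space set"
  assumes c: "indexed_basis W m c" and z: "z \<notin> W"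
  shows "indexed_basis (span (insert z W)) (Suc m) (c(m := z))"
proof -
  have span: "span (c ` {..<m}) = W" and inj: "inj_on c {..<m}" and ind: "independent (c ` {..<m})"
    using c unfolding indexed_basis_def by blast+
  have image: "c(m := z) ` {..<Suc m} = insert z (c ` {..<m})"
    by (auto simp: lessThan_Suc)
  have z_span: "z \<notin> span (c ` {..<m})"
    using span z by simp
  then have "z \<notin> c ` {..<m}"
    by (blast intro: span_base)
  moreover have "independent (insert z (c ` {..<m}))"
    using z_span ind by (rule independent_insertI)
  moreover have "inj_on (c(m := z)) (insert m {..<m})"
  proof -
    have "inj_on (c(m := z)) {..<m}"
      using inj unfolding inj_on_def by simp
    moreover have "(c(m := z)) m \<notin> c(m := z) ` ({..<m} - {m})"
      using \<open>z \<notin> c ` {..<m}\<close> by auto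
    ultimately show ?thesis
      by simp
  qed
  moreover have "span W = W"
    using span span_span by metis
  then have "span (insert z (c ` {..<m})) = span (insert z W)"
    by (simp only: span_insert span)
  ultimately show ?thesis
    unfolding indexed_basis_def image by (simp add: lessThan_Suc)
qed

lemma abs_det_on_nonneg: "abs_det_on L V \<ge> 0"
  unfolding abs_det_on_def Let_def gram_vol_def
  by (intro divide_nonneg_nonneg real_sqrt_ge_zero gram_det_nonneg)

lemma abs_det_on_dim_0:
  assumes "dim V = 0"
  shows "abs_det_on L V = 1"
  unfolding abs_det_on_def Let_def gram_vol_def assms by simp

text \<open>A change of basis multiplies both Gram determinants by the same positive factor.\<close>

lemma abs_det_on_basis:
  fixes V :: "'a::euclidean_space set"
  assumes L: "linear L" and V: "subspace V" and c: "indexed_basis V k c"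
  shows "abs_det_on L V = sqrt (gram_det k (L \<circ> c)) / sqrt (gram_det k c)"
proof -
  have k: "dim V = k"
    using indexed_basis_dim[OF c] .
  define b where "b = (SOME b. indexed_basis V k b)"
  obtain b0 where "indexed_basis V k b0"
    using indexed_basis_exists[OF V] unfolding k .
  then have b: "indexed_basis V k b"
    unfolding b_def by (rule someI[where P = "indexed_basis V k"])
  have ad: "abs_det_on L V = sqrt (gram_det k (L \<circ> b)) / sqrt (gram_det k b)"
    unfolding abs_det_on_def Let_def gram_vol_def b_def indexed_basis_def k by (rule refl)
  have "\<forall>j<k. \<exists>a. c j = (\<Sum>i<k. a i *\<^sub>R b i)"
  proof (intro allI impI)
    fix j assume "j < k"
    then have "c j \<in> span (b ` {..<k})"
      using indexed_basis_in[OF c] b by (simp add: indexed_basis_def)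
    then show "\<exists>a. c j = (\<Sum>i<k. a i *\<^sub>R b i)"
      by (rule span_image_lessThan_imp_sum)
  qed
  then obtain Q where Q: "\<And>j. j < k \<Longrightarrow> c j = (\<Sum>i<k. Q j i *\<^sub>R b i)"
    by metis
  define P where "P = (\<lambda>i j. Q j i)"
  have cP: "gram_det k c = (det_nat k P)\<^sup>2 * gram_det k b"
    by (rule gram_det_change_basis) (simp add: Q P_def)
  have LcP: "gram_det k (L \<circ> c) = (det_nat k P)\<^sup>2 * gram_det k (L \<circ> b)"
    by (rule gram_det_change_basis) (simp add: Q P_def linear_sum[OF L] linear_scale[OF L])
  have "gram_det k c > 0"
    using c unfolding indexed_basis_def by (intro gram_det_pos) auto
  then have "\<bar>det_nat k P\<bar> > 0"
    using cP by (auto simp: zero_less_mult_iff)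
  then show ?thesis
    unfolding ad cP LcP by (simp add: real_sqrt_mult)
qed

lemma abs_det_on_le_orthogonal_section:
  fixes V :: "'a::euclidean_space set"
  assumes L: "linear L" and V: "subspace V" and z: "z \<in> V" "norm z = 1"
  shows "Suc (dim (V \<inter> {w. z \<bullet> w = 0})) = dim V"
    and "abs_det_on L V \<le> abs_det_on L (V \<inter> {w. z \<bullet> w = 0}) * norm (L z)"
proof -
  define W where "W = V \<inter> {w. z \<bullet> w = 0}"
  have W: "subspace W"
    unfolding W_def using V subspace_hyperplane by (rule subspace_inter)
  obtain c where c: "indexed_basis W (dim W) c"
    using indexed_basis_exists[OF W] .
  define m where "m = dim W"
  have zz: "z \<bullet> z = 1"
    using z(2) by (simp add: norm_eq_sqrt_inner)
  have span: "span (insert z W) = V"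
  proof (rule subset_antisym)
    show "span (insert z W) \<subseteq> V"
      using V z(1) by (intro span_minimal) (auto simp: W_def)
    show "V \<subseteq> span (insert z W)"
    proof
      fix v assume v: "v \<in> V"
      have "v - (z \<bullet> v) *\<^sub>R z \<in> W"
        using v z(1) V zz by (simp add: W_def subspace_diff subspace_scale inner_diff_right)
      then show "v \<in> span (insert z W)"
        unfolding span_breakdown_eq by (blast intro: span_base)
    qed
  qed
  have "z \<notin> W"
    using zz by (auto simp: W_def)
  from indexed_basis_extend[OF c this] have c': "indexed_basis V (Suc m) (c(m := z))"
    unfolding span m_def .
  then show "Suc (dim W) = dim V"
    using indexed_basis_dim unfolding m_def by metis
  have "gram_det (Suc m) (c(m := z)) = gram_det m c"
    using gram_det_Suc_orthogonal[of m "c(m := z)"] indexed_basis_in[OF c] gram_det_cong[of m c "c(m := z)"]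
    by (simp add: W_def m_def zz)
  moreover have "gram_det (Suc m) (L \<circ> c(m := z)) \<le> gram_det m (L \<circ> c) * (L z \<bullet> L z)"
    using gram_det_Suc_le[of m "L \<circ> c(m := z)"] gram_det_cong[of m "L \<circ> c" "L \<circ> c(m := z)"]
    by simp
  ultimately have "abs_det_on L V \<le> sqrt (gram_det m (L \<circ> c) * (L z \<bullet> L z)) / sqrt (gram_det m c)"
    using abs_det_on_basis[OF L V c'] gram_det_nonneg[of m c] by (simp add: divide_right_mono)
  also have "\<dots> = abs_det_on L W * norm (L z)"
    using abs_det_on_basis[OF L W c] by (simp add: real_sqrt_mult norm_eq_sqrt_inner m_def)
  finally show "abs_det_on L V \<le> abs_det_on L W * norm (L z)" .
qed

lemma abs_det_on_insert_orthogonal_image: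
  fixes V :: "'a::euclidean_space set"
  assumes L: "linear L" and V: "subspace V" and y: "norm y = 1"
    and orth: "\<And>v. v \<in> V \<Longrightarrow> L y \<bullet> L v = 0" and Ly: "L y \<noteq> 0"
  shows "dim (span (insert y V)) = Suc (dim V)"
    and "abs_det_on L V * norm (L y) \<le> abs_det_on L (span (insert y V))"
proof -
  obtain c where c: "indexed_basis V (dim V) c"
    using indexed_basis_exists[OF V] .
  define m where "m = dim V"
  have "y \<notin> V"
    using orth[of y] Ly by auto
  from indexed_basis_extend[OF c this] have c': "indexed_basis (span (insert y V)) (Suc m) (c(m := y))"
    unfolding m_def .
  then show "dim (span (insert y V)) = Suc (dim V)"
    using indexed_basis_dim unfolding m_def by metis
  have "y \<bullet> y = 1"
    using y by (simp add: norm_eq_sqrt_inner)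
  then have "gram_det (Suc m) (c(m := y)) \<le> gram_det m c"
    using gram_det_Suc_le[of m "c(m := y)"] gram_det_cong[of m c "c(m := y)"] by simp
  moreover have "gram_det (Suc m) (L \<circ> c(m := y)) = gram_det m (L \<circ> c) * (L y \<bullet> L y)"
    using gram_det_Suc_orthogonal[of m "L \<circ> c(m := y)"] gram_det_cong[of m "L \<circ> c" "L \<circ> c(m := y)"]
      orth indexed_basis_in[OF c]
    by (simp add: m_def)
  moreover have "gram_det (Suc m) (c(m := y)) > 0"
    using c' gram_det_pos unfolding indexed_basis_def by blast
  ultimately have "sqrt (gram_det m (L \<circ> c) * (L y \<bullet> L y)) / sqrt (gram_det m c)
      \<le> abs_det_on L (span (insert y V))"
    using abs_det_on_basis[OF L _ c'] gram_det_nonneg[of m "L \<circ> c"]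
    by (simp add: divide_left_mono)
  then show "abs_det_on L V * norm (L y) \<le> abs_det_on L (span (insert y V))"
    using abs_det_on_basis[OF L V c] by (simp add: real_sqrt_mult norm_eq_sqrt_inner m_def)
qed

lemma subspace_obtain_unit:
  fixes V :: "'a::euclidean_space set"
  assumes "subspace V" "dim V > 0"
  obtains z where "z \<in> V" "norm z = 1"
proof -
  obtain v where "v \<in> V" "v \<noteq> 0"
    using assms(2) dim_eq_0 by (metis not_gr_zero subsetI singleton_iff)
  then show thesis
    using that[of "v /\<^sub>R norm v"] assms(1) by (simp add: subspace_scale)
qed

lemma abs_det_on_bounded:
  fixes L :: "'a::euclidean_space \<Rightarrow> 'a"
  assumes L: "linear L"
  obtains B where "\<And>V. subspace V \<Longrightarrow> abs_det_on L V \<le> B ^ dim V"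
proof -
  obtain B where B: "B > 0" "\<And>x. norm (L x) \<le> B * norm x"
    using linear_bounded_pos[OF L] by blast
  have "abs_det_on L V \<le> B ^ n" if "subspace V" "dim V = n" for V n
    using that
  proof (induction n arbitrary: V)
    case 0
    then show ?case by (simp add: abs_det_on_dim_0 del: dim_eq_0)
  next
    case (Suc n)
    obtain z where z: "z \<in> V" "norm z = 1"
      using subspace_obtain_unit[of V] Suc.prems by auto
    let ?W = "V \<inter> {w. z \<bullet> w = 0}"
    have "abs_det_on L V \<le> abs_det_on L ?W * norm (L z)"
      using abs_det_on_le_orthogonal_section[OF L Suc.prems(1) z] by simp
    also have "\<dots> \<le> B ^ n * B"
    proof (rule mult_mono)
      show "abs_det_on L ?W \<le> B ^ n"
        using Suc.IH abs_det_on_le_orthogonal_section(1)[OF L Suc.prems(1) z] Suc.prems(2)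
          subspace_inter[OF Suc.prems(1) subspace_hyperplane]
        by (simp add: subspace_hyperplane)
      show "norm (L z) \<le> B"
        using B(2)[of z] z by simp
    qed (use B(1) in auto)
    finally show ?case by (simp add: mult.commute)
  qed
  then show thesis
    using that by blast
qed

lemma bdd_above_abs_det_on:
  fixes L :: "'a::euclidean_space \<Rightarrow> 'a"
  assumes "linear L"
  shows "bdd_above {abs_det_on L V | V. subspace V \<and> V \<subseteq> T \<and> dim V = k}"
proof -
  obtain B where "\<And>V. subspace V \<Longrightarrow> abs_det_on L V \<le> B ^ dim V"
    using abs_det_on_bounded[OF assms] by blast
  then show ?thesis
    unfolding bdd_above_def by (intro exI[of _ "B ^ k"]) auto
qed

section \<open>Comparing maximal determinants in different dimensions\<close>

lemma max_det_le_max_det: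
  fixes L :: "'a::euclidean_space \<Rightarrow> 'a"
  assumes L: "linear L" and T: "subspace T" and k: "k \<le> dim T"
    and le: "\<And>V. subspace V \<Longrightarrow> V \<subseteq> T \<Longrightarrow> dim V = k \<Longrightarrow>
      \<exists>W. subspace W \<and> W \<subseteq> T \<and> dim W = k' \<and> abs_det_on L V \<le> abs_det_on L W"
  shows "max_det L T k \<le> max_det L T k'"
  unfolding max_det_def
proof (rule cSup_least)
  obtain V where "subspace V" "V \<subseteq> span T" "dim V = k"
    using choose_subspace_of_subspace[OF k] .
  moreover have "span T = T"
    using T by simp
  ultimately show "{abs_det_on L V |V. subspace V \<and> V \<subseteq> T \<and> dim V = k} \<noteq> {}"
    using T by auto
next
  fix d assume "d \<in> {abs_det_on L V |V. subspace V \<and> V \<subseteq> T \<and> dim V = k}"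
  then obtain W where W: "subspace W" "W \<subseteq> T" "dim W = k'" "d \<le> abs_det_on L W"
    using le by blast
  have "abs_det_on L W \<le> Sup {abs_det_on L V |V. subspace V \<and> V \<subseteq> T \<and> dim V = k'}"
    using W bdd_above_abs_det_on[OF L] by (intro cSup_upper) auto
  with W(4) show "d \<le> Sup {abs_det_on L V |V. subspace V \<and> V \<subseteq> T \<and> dim V = k'}"
    by linarith
qed

lemma subspace_Int_obtain_unit:
  fixes V E :: "'a::euclidean_space set"
  assumes "subspace T" "subspace V" "subspace E" "V \<subseteq> T" "E \<subseteq> T" "dim T < dim V + dim E"
  obtains z where "z \<in> V" "z \<in> E" "norm z = 1"
proof -
  have "{x + y |x y. x \<in> V \<and> y \<in> E} \<subseteq> T"
    using assms by (auto intro: subspace_add)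
  then have "dim {x + y |x y. x \<in> V \<and> y \<in> E} \<le> dim T"
    by (rule dim_subset)
  then have "dim (V \<inter> E) > 0"
    using dim_sums_Int[OF assms(2,3)] assms(6) by linarith
  then show thesis
    using subspace_obtain_unit[OF subspace_inter[OF assms(2,3)]] that by blast
qed

lemma subspace_obtain_unit_orthogonal:
  fixes E U :: "'a::euclidean_space set"
  assumes "subspace E" "subspace U" "dim U < dim E"
  obtains y where "y \<in> E" "norm y = 1" "\<And>u. u \<in> U \<Longrightarrow> u \<bullet> y = 0"
proof -
  have "dim (orthogonal_comp U) + dim U = dim (UNIV :: 'a set)"
    using dim_subspace_orthogonal_to_vectors[OF assms(2) subspace_UNIV] by (simp add: orthogonal_comp_def)
  then have "dim (UNIV :: 'a set) < dim (orthogonal_comp U) + dim E"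
    using assms(3) by linarith
  then obtain y where "y \<in> orthogonal_comp U" "y \<in> E" "norm y = 1"
    by (rule subspace_Int_obtain_unit[OF subspace_UNIV subspace_orthogonal_comp assms(1) subset_UNIV subset_UNIV])
  then show thesis
    using that by (auto simp: orthogonal_comp_def Linear_Algebra.orthogonal_def)
qed

lemma abs_det_on_descend:
  fixes L :: "'a::euclidean_space \<Rightarrow> 'a"
  assumes L: "linear L" and T: "subspace T" and E: "subspace E" "E \<subseteq> T"
    and nonexpanding: "\<And>z. z \<in> E \<Longrightarrow> norm (L z) \<le> norm z" and dim: "dim T = dim E + m"
  shows "subspace V \<Longrightarrow> V \<subseteq> T \<Longrightarrow> dim V = m + i \<Longrightarrow>
    \<exists>W. subspace W \<and> W \<subseteq> T \<and> dim W = m \<and> abs_det_on L V \<le> abs_det_on L W"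
proof (induction i arbitrary: V)
  case (Suc i)
  obtain z where z: "z \<in> V" "z \<in> E" "norm z = 1"
    using subspace_Int_obtain_unit[OF T Suc.prems(1) E(1) Suc.prems(2) E(2)] Suc.prems(3) dim
    by auto
  define W where "W = V \<inter> {w. z \<bullet> w = 0}"
  have W: "subspace W" "W \<subseteq> T" "dim W = m + i"
    using abs_det_on_le_orthogonal_section(1)[OF L Suc.prems(1) z(1,3)] Suc.prems
    by (auto simp: W_def subspace_inter subspace_hyperplane)
  have "abs_det_on L V \<le> abs_det_on L W * norm (L z)"
    using abs_det_on_le_orthogonal_section(2)[OF L Suc.prems(1) z(1,3)] by (simp add: W_def)
  also have "\<dots> \<le> abs_det_on L W"
    using nonexpanding[OF z(2)] z(3) abs_det_on_nonneg[of L W] by (simp add: mult_left_le)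
  finally show ?case
    using Suc.IH[OF W] by fastforce
qed auto

lemma max_det_le_of_nonexpanding:
  fixes L :: "'a::euclidean_space \<Rightarrow> 'a"
  assumes L: "linear L" and T: "subspace T" and E: "subspace E" "E \<subseteq> T"
    and nonexpanding: "\<And>z. z \<in> E \<Longrightarrow> norm (L z) \<le> norm z" and dim: "dim T = dim E + m"
    and i: "i \<le> dim E"
  shows "max_det L T (i + m) \<le> max_det L T m"
  using abs_det_on_descend[OF L T E nonexpanding dim] i dim
  by (intro max_det_le_max_det[OF L T]) (auto simp: add.commute)

lemma abs_det_on_ascend:
  fixes L :: "'a::euclidean_space \<Rightarrow> 'a"
  assumes L: "linear L" and T: "subspace T" and E: "subspace E" "E \<subseteq> T"
    and nonshrinking: "\<And>z. z \<in> E \<Longrightarrow> norm z \<le> norm (L z)"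
  shows "subspace V \<Longrightarrow> V \<subseteq> T \<Longrightarrow> dim V + i = dim E \<Longrightarrow>
    \<exists>W. subspace W \<and> W \<subseteq> T \<and> dim W = dim E \<and> abs_det_on L V \<le> abs_det_on L W"
proof (induction i arbitrary: V)
  case (Suc i)
  \<comment> \<open>As L y \<bullet> L v = y \<bullet> adjoint L (L v), it suffices that y be orthogonal to a space of
    dimension at most dim V < dim E.\<close>
  let ?U = "adjoint L ` L ` V"
  have "subspace ?U"
    using Suc.prems(1) L adjoint_linear[OF L] by (simp add: linear_subspace_image)
  moreover have "dim ?U < dim E"
    using dim_image_le[OF adjoint_linear[OF L], of "L ` V"] dim_image_le[OF L, of V] Suc.prems(3)
    by linarith
  ultimately obtain y where y: "y \<in> E" "norm y = 1" "\<And>u. u \<in> ?U \<Longrightarrow> u \<bullet> y = 0"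
    using subspace_obtain_unit_orthogonal[OF E(1)] by blast
  have orth: "L y \<bullet> L v = 0" if "v \<in> V" for v
    using y(3)[of "adjoint L (L v)"] that adjoint_works[OF L] by (simp add: inner_commute)
  have grow: "norm y \<le> norm (L y)"
    using nonshrinking[OF y(1)] .
  then have Ly: "L y \<noteq> 0"
    using y(2) by auto
  define W where "W = span (insert y V)"
  note ins = abs_det_on_insert_orthogonal_image[OF L Suc.prems(1) y(2) orth Ly, folded W_def]
  have "W \<subseteq> T"
    unfolding W_def using y(1) E(2) Suc.prems(2) T by (intro span_minimal) auto
  then have W: "subspace W" "W \<subseteq> T" "dim W + i = dim E"
    using ins(1) Suc.prems(3) by (simp_all add: W_def)
  have "abs_det_on L V \<le> abs_det_on L V * norm (L y)"
    using grow y(2) abs_det_on_nonneg[of L V] by (simp add: mult_le_cancel_left1)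
  also have "\<dots> \<le> abs_det_on L W"
    using ins(2) .
  finally show ?case
    using Suc.IH[OF W] by fastforce
qed auto

lemma max_det_le_of_nonshrinking:
  fixes L :: "'a::euclidean_space \<Rightarrow> 'a"
  assumes L: "linear L" and T: "subspace T" and E: "subspace E" "E \<subseteq> T"
    and nonshrinking: "\<And>z. z \<in> E \<Longrightarrow> norm z \<le> norm (L z)" and i: "i \<le> dim E"
  shows "max_det L T i \<le> max_det L T (dim E)"
proof (rule max_det_le_max_det[OF L T])
  show "i \<le> dim T"
    using i dim_subset[OF E(2)] by linarith
  show "\<exists>W. subspace W \<and> W \<subseteq> T \<and> dim W = dim E \<and> abs_det_on L V \<le> abs_det_on L W"
    if "subspace V" "V \<subseteq> T" "dim V = i" for V
    using abs_det_on_ascend[OF L T E nonshrinking that(1,2), of "dim E - i"] that(3) i by simp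
qed

section \<open>Derivatives along a submanifold\<close>

lemma has_derivative_within_unique_on_tangent_space:
  fixes g :: "'a::euclidean_space \<Rightarrow> 'b::real_normed_vector"
  assumes D1: "(g has_derivative D1) (at x within M)" and D2: "(g has_derivative D2) (at x within M)"
    and v: "v \<in> tangent_space M x"
  shows "D1 v = D2 v"
proof -
  obtain \<gamma> :: "real \<Rightarrow> 'a" where \<gamma>: "\<And>t. \<gamma> t \<in> M" "\<gamma> 0 = x" "(\<gamma> has_vector_derivative v) (at 0)"
    using v unfolding tangent_space_def by blast
  have "\<gamma> ` UNIV \<subseteq> M"
    using \<gamma>(1) by auto
  then have "(g has_derivative D) (at (\<gamma> 0) within range \<gamma>)"
    if "(g has_derivative D) (at x within M)" for D
    using has_derivative_subset[OF that] \<gamma>(2) by simp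
  then have "((g \<circ> \<gamma>) has_derivative D1 \<circ> (\<lambda>t. t *\<^sub>R v)) (at 0)"
    and "((g \<circ> \<gamma>) has_derivative D2 \<circ> (\<lambda>t. t *\<^sub>R v)) (at 0)"
    using \<gamma>(3) D1 D2 by (auto simp: has_vector_derivative_def intro: diff_chain_within)
  then have "(D1 \<circ> (\<lambda>t. t *\<^sub>R v)) 1 = (D2 \<circ> (\<lambda>t. t *\<^sub>R v)) 1"
    by (metis has_derivative_unique)
  then show ?thesis by simp
qed

lemma has_derivative_diffM:
  assumes "(g has_derivative D) (at x within M)"
  shows "(g has_derivative diffM M g x) (at x within M)"
  unfolding diffM_def using assms by (rule someI[where P = "\<lambda>D. (g has_derivative D) (at x within M)"])

lemma C1_map_on_into: "C1_map_on M g \<Longrightarrow> x \<in> M \<Longrightarrow> g x \<in> M"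
  unfolding C1_map_on_def by blast

lemma C1_map_on_funpow_into: "C1_map_on M g \<Longrightarrow> x \<in> M \<Longrightarrow> (g ^^ n) x \<in> M"
  by (induction n) (auto simp: C1_map_on_into)

lemma C1_map_on_has_derivative:
  fixes g :: "'a::euclidean_space \<Rightarrow> 'a"
  assumes g: "C1_map_on M g" and x: "x \<in> M"
  obtains D where "(g has_derivative D) (at x within M)"
proof -
  obtain U F F' where U: "open U" "x \<in> U" "\<forall>y\<in>M \<inter> U. F y = g y"
    and F': "\<forall>y\<in>U. (F has_derivative blinfun_apply (F' y)) (at y)"
    using g x unfolding C1_map_on_def C1_on_def by blast
  obtain d where d: "d > 0" "ball x d \<subseteq> U"
    using U(1,2) openE by blast
  have "(F has_derivative blinfun_apply (F' x)) (at x within M)"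
    using F' U(2) has_derivative_at_withinI by blast
  then have "(g has_derivative blinfun_apply (F' x)) (at x within M)"
  proof (rule has_derivative_transform_within[OF _ d(1) x])
    fix y assume "y \<in> M" "dist y x < d"
    with d(2) U(3) show "F y = g y"
      by (auto simp: dist_commute)
  qed
  then show thesis ..
qed

lemma diff_chain_within_self:
  assumes "(g has_derivative D) (at x within M)" and "(h has_derivative D') (at (g x) within M)"
    and "g ` M \<subseteq> M"
  shows "((h \<circ> g) has_derivative D' \<circ> D) (at x within M)"
  using diff_chain_within[OF assms(1) has_derivative_subset[OF assms(2,3)]] .

lemma has_derivative_diffM_C1_map_on:
  fixes g :: "'a::euclidean_space \<Rightarrow> 'a"
  assumes "C1_map_on M g" "x \<in> M"
  shows "(g has_derivative diffM M g x) (at x within M)"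
  using C1_map_on_has_derivative[OF assms] has_derivative_diffM by metis

lemma has_derivative_diffM_funpow:
  fixes g :: "'a::euclidean_space \<Rightarrow> 'a"
  assumes g: "C1_map_on M g" and x: "x \<in> M"
  shows "((g ^^ n) has_derivative diffM M (g ^^ n) x) (at x within M)"
proof (induction n)
  case 0
  show ?case
    unfolding funpow.simps(1) id_def by (rule has_derivative_diffM[OF has_derivative_ident])
next
  case (Suc n)
  have "((g \<circ> g ^^ n) has_derivative diffM M g ((g ^^ n) x) \<circ> diffM M (g ^^ n) x) (at x within M)"
    using Suc.IH has_derivative_diffM_C1_map_on[OF g C1_map_on_funpow_into[OF g x]]
    by (rule diff_chain_within_self) (auto intro: C1_map_on_funpow_into[OF g])
  from has_derivative_diffM[OF this] show ?case
    unfolding funpow.simps(2) .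
qed

lemma linear_diffM_funpow:
  fixes g :: "'a::euclidean_space \<Rightarrow> 'a"
  shows "C1_map_on M g \<Longrightarrow> x \<in> M \<Longrightarrow> linear (diffM M (g ^^ n) x)"
  using has_derivative_diffM_funpow has_derivative_linear by blast

lemma diffM_funpow_0:
  assumes "v \<in> tangent_space M x"
  shows "diffM M (g ^^ 0) x v = v"
  unfolding funpow.simps(1) id_def
  using has_derivative_within_unique_on_tangent_space[OF
      has_derivative_diffM[OF has_derivative_ident] has_derivative_ident assms] .

lemma diffM_funpow_Suc:
  fixes g :: "'a::euclidean_space \<Rightarrow> 'a"
  assumes g: "C1_map_on M g" and x: "x \<in> M" and v: "v \<in> tangent_space M x"
  shows "diffM M (g ^^ Suc n) x v = diffM M g ((g ^^ n) x) (diffM M (g ^^ n) x v)"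
proof -
  have "((g \<circ> g ^^ n) has_derivative diffM M g ((g ^^ n) x) \<circ> diffM M (g ^^ n) x) (at x within M)"
    using has_derivative_diffM_funpow[OF g x] has_derivative_diffM_C1_map_on[OF g C1_map_on_funpow_into[OF g x]]
    by (rule diff_chain_within_self) (auto intro: C1_map_on_funpow_into[OF g])
  from has_derivative_within_unique_on_tangent_space[OF has_derivative_diffM_funpow[OF g x, of "Suc n"] _ v]
    this
  show ?thesis by simp
qed

lemma invariant_subbundle_funpow:
  fixes f :: "'a::euclidean_space \<Rightarrow> 'a"
  assumes f: "C1_map_on M f" and E: "invariant_subbundle M f E"
    and tangent: "\<And>y. y \<in> M \<Longrightarrow> E y \<subseteq> tangent_space M y" and x: "x \<in> M" and v: "v \<in> E x"
  shows "diffM M (f ^^ n) x v \<in> E ((f ^^ n) x)"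
proof (induction n)
  case 0
  show ?case
    unfolding diffM_funpow_0[OF subsetD[OF tangent[OF x] v]] using v by simp
next
  case (Suc n)
  then have "diffM M f ((f ^^ n) x) (diffM M (f ^^ n) x v) \<in> E (f ((f ^^ n) x))"
    using E C1_map_on_funpow_into[OF f x] unfolding invariant_subbundle_def by blast
  then show ?case
    unfolding diffM_funpow_Suc[OF f x subsetD[OF tangent[OF x] v]] by simp
qed

lemma inv_into_funpow_cancel:
  assumes f: "bij_betw f M M" and z: "z \<in> M"
  shows "(inv_into M f ^^ n) ((f ^^ n) z) = z"
proof (induction n)
  case (Suc n)
  have "(f ^^ n) z \<in> M"
    using f z by (induction n) (auto simp: bij_betw_def)
  then have "inv_into M f ((f ^^ Suc n) z) = (f ^^ n) z"
    using f by (simp add: bij_betw_def inv_into_f_f)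
  then show ?case
    using Suc.IH by (simp add: funpow_Suc_right del: funpow.simps)
qed simp

lemma diffM_inv_into_funpow_cancel:
  fixes f :: "'a::euclidean_space \<Rightarrow> 'a"
  assumes f: "C1_diffeo_of M f" and x: "x \<in> M" and v: "v \<in> tangent_space M x"
  shows "diffM M (inv_into M f ^^ n) ((f ^^ n) x) (diffM M (f ^^ n) x v) = v"
proof -
  let ?h = "inv_into M f"
  have fC: "C1_map_on M f" and hC: "C1_map_on M ?h" and bij: "bij_betw f M M"
    using f unfolding C1_diffeo_of_def by auto
  have "(((?h ^^ n) \<circ> (f ^^ n)) has_derivative diffM M (?h ^^ n) ((f ^^ n) x) \<circ> diffM M (f ^^ n) x)
      (at x within M)"
    using has_derivative_diffM_funpow[OF fC x] has_derivative_diffM_funpow[OF hC C1_map_on_funpow_into[OF fC x]]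
    by (rule diff_chain_within_self) (auto intro: C1_map_on_funpow_into[OF fC])
  then have "((\<lambda>z. z) has_derivative diffM M (?h ^^ n) ((f ^^ n) x) \<circ> diffM M (f ^^ n) x)
      (at x within M)"
    by (rule has_derivative_transform_within[where d = 1])
      (use x in \<open>auto simp: inv_into_funpow_cancel[OF bij]\<close>)
  from has_derivative_within_unique_on_tangent_space[OF this has_derivative_ident v]
  show ?thesis by simp
qed

section \<open>Partially hyperbolic splittings\<close>

lemma partially_hyperbolic_splitting_subspaces:
  assumes "partially_hyperbolic_splitting M f Es Ec l Eu" and "x \<in> M"
  shows "subspace (tangent_space M x)" "subspace (Es x)" "subspace (Eu x)"
    "Es x \<subseteq> tangent_space M x" "Eu x \<subseteq> tangent_space M x"
  using assms unfolding partially_hyperbolic_splitting_def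
  by (metis subspace_span, blast, blast, (metis span_superset sup.bounded_iff)+)

lemma partially_hyperbolic_splitting_dim:
  assumes "partially_hyperbolic_splitting M f Es Ec l Eu" and "x \<in> M"
    and "\<forall>i\<in>{1..l}. dim (Ec i x) = 1"
  shows "dim (tangent_space M x) = dim (Es x) + (l + dim (Eu x))"
proof -
  have "(\<Sum>i=1..l. dim (Ec i x)) = l"
    using assms(3) by simp
  then show ?thesis
    using assms(1,2) unfolding partially_hyperbolic_splitting_def by auto
qed

text \<open>Invariance of E^u is the case i = l of the dominated splittings.\<close>

lemma partially_hyperbolic_splitting_unstable_invariant:
  assumes phs: "partially_hyperbolic_splitting M f Es Ec l Eu" and f: "C1_map_on M f"
  shows "invariant_subbundle M f Eu"
proof -
  have "\<forall>i\<in>{0..l}. dominated_splitting M f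
      (\<lambda>x. span (Es x \<union> (\<Union>j\<in>{1..i}. Ec j x))) (\<lambda>x. span ((\<Union>j\<in>{i+1..l}. Ec j x) \<union> Eu x))"
    using phs unfolding partially_hyperbolic_splitting_def by blast
  then have "dominated_splitting M f
      (\<lambda>x. span (Es x \<union> (\<Union>j\<in>{1..l}. Ec j x))) (\<lambda>x. span ((\<Union>j\<in>{l+1..l}. Ec j x) \<union> Eu x))"
    by (rule bspec) simp
  then have "invariant_subbundle M f (\<lambda>x. span (Eu x))"
    unfolding dominated_splitting_def by simp
  moreover have "span (Eu x) = Eu x" if "x \<in> M" for x
    using partially_hyperbolic_splitting_subspaces(3)[OF phs that] by simp
  ultimately show ?thesis
    using C1_map_on_into[OF f] by (simp add: invariant_subbundle_def)
qed

lemma partially_hyperbolic_splitting_eventually_norm_le: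
  assumes phs: "partially_hyperbolic_splitting M f Es Ec l Eu" and f: "C1_diffeo_of M f"
  shows "\<forall>\<^sub>F n in sequentially. \<forall>x\<in>M.
    (\<forall>v\<in>Es x. norm (diffM M (f ^^ n) x v) \<le> norm v) \<and> (\<forall>v\<in>Eu x. norm v \<le> norm (diffM M (f ^^ n) x v))"
proof -
  have fC: "C1_map_on M f"
    using f by (simp add: C1_diffeo_of_def)
  obtain C lam where lam: "0 < lam" "lam < 1" and
    hyp: "\<forall>x\<in>M. \<forall>k. (\<forall>v\<in>Es x. norm (diffM M (f ^^ k) x v) \<le> C * lam ^ k * norm v) \<and>
      (\<forall>v\<in>Eu x. norm (diffM M (inv_into M f ^^ k) x v) \<le> C * lam ^ k * norm v)"
    using phs unfolding partially_hyperbolic_splitting_def by blast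
  have "(\<lambda>n. C * lam ^ n) \<longlonglongrightarrow> C * 0"
    using lam by (intro tendsto_mult_left LIMSEQ_power_zero) simp
  then have "\<forall>\<^sub>F n in sequentially. C * lam ^ n < 1"
    by (rule order_tendstoD) simp
  then show ?thesis
  proof (rule eventually_mono, intro ballI conjI)
    fix n x assume small: "C * lam ^ n < 1" and x: "x \<in> M"
    have scaled: "C * lam ^ n * r \<le> r" if "r \<ge> 0" for r
      using mult_right_mono[of "C * lam ^ n" 1 r] small that by simp
    show "norm (diffM M (f ^^ n) x v) \<le> norm v" if "v \<in> Es x" for v
      using order_trans[OF _ scaled[OF norm_ge_zero]] hyp x that by blast
    show "norm v \<le> norm (diffM M (f ^^ n) x v)" if v: "v \<in> Eu x" for v
    proof -
      let ?w = "diffM M (f ^^ n) x v"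
      have "v \<in> tangent_space M x"
        using partially_hyperbolic_splitting_subspaces(5)[OF phs x] v ..
      then have "norm v = norm (diffM M (inv_into M f ^^ n) ((f ^^ n) x) ?w)"
        by (simp add: diffM_inv_into_funpow_cancel[OF f x])
      also have "\<dots> \<le> C * lam ^ n * norm ?w"
      proof -
        have "?w \<in> Eu ((f ^^ n) x)"
          using invariant_subbundle_funpow[OF fC partially_hyperbolic_splitting_unstable_invariant[OF phs fC]
            partially_hyperbolic_splitting_subspaces(5)[OF phs] x v] .
        then show ?thesis
          using hyp C1_map_on_funpow_into[OF fC x] by blast
      qed
      also have "\<dots> \<le> norm ?w"
        by (rule scaled) simp
      finally show ?thesis .
    qed
  qed
qed

theorem mainTheorem11:
  fixes M :: "'a::euclidean_space set" and f :: "'a \<Rightarrow> 'a"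
    and Es Eu :: "'a \<Rightarrow> 'a set" and Ec :: "nat \<Rightarrow> 'a \<Rightarrow> 'a set"
    and l s u :: nat
  assumes "compact M" and "C1_submanifold M" and "C1_diffeo_of M f"
    and "partially_hyperbolic_splitting M f Es Ec l Eu"
    and "\<forall>i\<in>{1..l}. \<forall>x\<in>M. dim (Ec i x) = 1"
    and "\<forall>x\<in>M. dim (Es x) = s" and "\<forall>x\<in>M. dim (Eu x) = u"
  shows "\<exists>T2::nat. \<forall>x\<in>M. \<forall>n\<ge>T2.
           (\<forall>i_s\<in>{1..s}. max_det (diffM M (f ^^ n) x) (tangent_space M x) (i_s + l + u)
                          \<le> max_det (diffM M (f ^^ n) x) (tangent_space M x) (l + u)) \<and>
           (\<forall>i_u\<in>{1..u}. max_det (diffM M (f ^^ n) x) (tangent_space M x) i_u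
                          \<le> max_det (diffM M (f ^^ n) x) (tangent_space M x) u)"
proof -
  obtain N where N: "\<And>n x. N \<le> n \<Longrightarrow> x \<in> M \<Longrightarrow>
      (\<forall>v\<in>Es x. norm (diffM M (f ^^ n) x v) \<le> norm v) \<and> (\<forall>v\<in>Eu x. norm v \<le> norm (diffM M (f ^^ n) x v))"
    using partially_hyperbolic_splitting_eventually_norm_le[OF assms(4,3)]
    unfolding eventually_sequentially by blast
  have L: "linear (diffM M (f ^^ n) x)" if "x \<in> M" for x n
    using assms(3) that by (simp add: C1_diffeo_of_def linear_diffM_funpow)
  note subspaces = partially_hyperbolic_splitting_subspaces[OF assms(4)]
  have stable: "max_det (diffM M (f ^^ n) x) (tangent_space M x) (i + l + u)
      \<le> max_det (diffM M (f ^^ n) x) (tangent_space M x) (l + u)"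
    if x: "x \<in> M" and n: "N \<le> n" and i: "i \<le> s" for x n i
  proof -
    have "dim (tangent_space M x) = dim (Es x) + (l + u)"
      using partially_hyperbolic_splitting_dim[OF assms(4) x] assms(5,7) x by simp
    then show ?thesis
      using max_det_le_of_nonexpanding[OF L[OF x] subspaces(1,2,4)[OF x]] N[OF n x] i assms(6) x
      by (simp add: add.assoc)
  qed
  have unstable: "max_det (diffM M (f ^^ n) x) (tangent_space M x) j
      \<le> max_det (diffM M (f ^^ n) x) (tangent_space M x) u"
    if x: "x \<in> M" and n: "N \<le> n" and j: "j \<le> u" for x n j
    using max_det_le_of_nonshrinking[OF L[OF x] subspaces(1,3,5)[OF x]] N[OF n x] j assms(7) x by simp
  show ?thesis
    using stable unstable by (intro exI[of _ N]) auto
qed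

end
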